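(* Let $\Gamma$ be a finite connected graph with $m$ edges and genus $g\ge1$, $B\in\mathbb Z^{g\times m}$ with rows a $\mathbb Z$-basis of $H_1(\Gamma,\mathbb Z)\subset\mathbb Z^m$, and $Q=BB^T$. Let $\mathbf a$ be a vertex of $V_Q$ and $[\mathbf a]$ its equivalence class. Then the convex hull of $[\mathbf a]$ equals $\mathbf a-D_{\mathbf a,Q}=\{\mathbf a-\mathbf x:\mathbf x\in D_{\mathbf a,Q}\}$, and $|[\mathbf a]|=|\mathcal D_{\mathbf a,Q}|$.
   Context: Edge lengths are all $1$, so $Q=BB^T$. $V_Q=\{\mathbf a\in\mathbb R^g:\ \mathbf a^TQ\mathbf a\le(\mathbf a-\mathbf c)^TQ(\mathbf a-\mathbf c)\ \forall\mathbf c\in\mathbb Z^g\}$. For a vertex $\mathbf a$ of $V_Q$, $\mathcal D_{\mathbf a,Q}=\{\mathbf c\in\mathbb Z^g:\ \mathbf a^TQ\mathbf a=(\mathbf a-\mathbf c)^TQ(\mathbf a-\mathbf c)\}$ and $D_{\mathbf a,Q}$ is its convex hull. On the vertex set of $V_Q$, $\mathbf a\sim\mathbf a'$ iff $\mathbf a'=\mathbf a-\mathbf c_0$ for some $\mathbf c_0\in\mathcal D_{\mathbf a,Q}$ (an equivalence relation); $[\mathbf a]$ denotes the class of $\mathbf a$. *)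

theory Defs
  imports "HOL-Analysis.Analysis"
begin

text \<open>A finite graph (multi-edges and loops allowed) with vertex type 'v and edge type 'm,
  each edge given an (arbitrary) orientation src e \<rightarrow> tgt e.\<close>

definition graph_connected :: "('m \<Rightarrow> 'v) \<Rightarrow> ('m \<Rightarrow> 'v) \<Rightarrow> bool" where
  "graph_connected src tgt \<longleftrightarrow>
     (\<forall>u v. (u, v) \<in> ({(src e, tgt e) | e. True} \<union> {(tgt e, src e) | e. True})\<^sup>*)"

definition H1 :: "('m::finite \<Rightarrow> 'v) \<Rightarrow> ('m \<Rightarrow> 'v) \<Rightarrow> (int ^ 'm) set" where
  "H1 src tgt = {x. \<forall>v. (\<Sum>e\<in>{e. tgt e = v}. x $ e) = (\<Sum>e\<in>{e. src e = v}. x $ e)}"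

definition rows_Z_basis :: "int ^ 'm ^ 'g \<Rightarrow> (int ^ 'm) set \<Rightarrow> bool" where
  "rows_Z_basis B H \<longleftrightarrow> (\<forall>i. B $ i \<in> H) \<and>
     (\<forall>x\<in>H. \<exists>!l :: int ^ 'g. x = (\<Sum>i\<in>UNIV. l $ i *s B $ i))"

definition int_points :: "(real ^ 'g) set" where
  "int_points = {c. \<forall>i. c $ i \<in> \<int>}"

definition qf :: "real ^ 'g ^ 'g \<Rightarrow> real ^ 'g \<Rightarrow> real" where
  "qf Q a = a \<bullet> (Q *v a)"

definition voronoi :: "real ^ 'g ^ 'g \<Rightarrow> (real ^ 'g) set" where
  "voronoi Q = {a. \<forall>c\<in>int_points. qf Q a \<le> qf Q (a - c)}"

definition voronoi_vertex :: "real ^ 'g ^ 'g \<Rightarrow> real ^ 'g \<Rightarrow> bool" where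
  "voronoi_vertex Q a \<longleftrightarrow> a extreme_point_of voronoi Q"

definition Dset :: "real ^ 'g ^ 'g \<Rightarrow> real ^ 'g \<Rightarrow> (real ^ 'g) set" where
  "Dset Q a = {c\<in>int_points. qf Q a = qf Q (a - c)}"

definition vertex_class :: "real ^ 'g ^ 'g \<Rightarrow> real ^ 'g \<Rightarrow> (real ^ 'g) set" where
  "vertex_class Q a = {a'. voronoi_vertex Q a' \<and> (\<exists>c0\<in>Dset Q a. a' = a - c0)}"

end

theory Submission
  imports Defs
begin

text \<open>Only the Voronoi geometry matters: the argument works for an arbitrary matrix Q. For c \<in> \<D>(a), the map x \<mapsto> q(x + c) - q(x) is affine
  and, since -c is an integer point, nonnegative on the Voronoi cell V; it vanishes at a - c.
  If a - c lay inside a segment of V, it would vanish at both ends, so the segment translated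
  by c would lie in V and contain a in its interior, contradicting that a is a vertex. Hence
  [a] = a - \<D>(a), and x \<mapsto> a - x is an affine bijection.\<close>

lemma int_points_diff: "x \<in> int_points \<Longrightarrow> y \<in> int_points \<Longrightarrow> x - y \<in> int_points"
  by (auto simp: int_points_def)

lemma int_points_uminus: "x \<in> int_points \<Longrightarrow> - x \<in> int_points"
  by (auto simp: int_points_def)

lemma qf_add_diff: "qf Q (x + c) - qf Q x = x \<bullet> (Q *v c) + c \<bullet> (Q *v x) + qf Q c"
  by (simp add: qf_def matrix_vector_right_distrib inner_add_left inner_add_right)

lemma qf_add_diff_convex_combination:
  fixes Q :: "real ^ 'g ^ 'g"
  shows "qf Q (((1 - u) *\<^sub>R p + u *\<^sub>R q) + c) - qf Q ((1 - u) *\<^sub>R p + u *\<^sub>R q)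
     = (1 - u) * (qf Q (p + c) - qf Q p) + u * (qf Q (q + c) - qf Q q)"
  unfolding qf_add_diff
  by (simp add: matrix_vector_right_distrib matrix_vector_mult_scaleR inner_add_left
      inner_add_right algebra_simps)

lemma qf_add_ge_voronoi:
  assumes "x \<in> voronoi Q" "c \<in> int_points"
  shows "qf Q x \<le> qf Q (x + c)"
  using assms int_points_uminus[of c] by (auto simp: voronoi_def)

lemma voronoi_add_int_point:
  fixes Q :: "real ^ 'g ^ 'g"
  assumes "x \<in> voronoi Q" "c \<in> int_points" "qf Q (x + c) = qf Q x"
  shows "x + c \<in> voronoi Q"
  unfolding voronoi_def
proof safe
  fix c' :: "real ^ 'g"
  assume "c' \<in> int_points"
  then have "qf Q x \<le> qf Q (x - (c' - c))"
    using assms(1,2) int_points_diff by (auto simp: voronoi_def)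
  then show "qf Q (x + c) \<le> qf Q (x + c - c')"
    using assms(3) by (simp add: algebra_simps)
qed

lemma convex_combination_nonneg_eq_0:
  fixes s t u :: real
  assumes "0 \<le> s" "0 \<le> t" "0 < u" "u < 1" "(1 - u) * s + u * t = 0"
  shows "s = 0" "t = 0"
proof -
  have "(1 - u) * s = 0 \<and> u * t = 0"
    using assms by (simp add: add_nonneg_eq_0_iff)
  then show "s = 0" "t = 0"
    using assms(3,4) by auto
qed

lemma voronoi_vertex_diff_Dset:
  assumes vertex: "voronoi_vertex Q a" and "c \<in> Dset Q a"
  shows "voronoi_vertex Q (a - c)"
proof -
  have aV: "a \<in> voronoi Q"
    and extreme: "\<And>p q. p \<in> voronoi Q \<Longrightarrow> q \<in> voronoi Q \<Longrightarrow> a \<notin> open_segment p q"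
    using vertex by (auto simp: voronoi_vertex_def extreme_point_of_def)
  have c: "c \<in> int_points" and qf_eq: "qf Q (a - c) = qf Q a"
    using \<open>c \<in> Dset Q a\<close> by (auto simp: Dset_def)
  have "a - c \<in> voronoi Q"
    using voronoi_add_int_point[OF aV int_points_uminus[OF c]] qf_eq by simp
  moreover have "a - c \<notin> open_segment p q" if pV: "p \<in> voronoi Q" and qV: "q \<in> voronoi Q" for p q
  proof
    assume seg: "a - c \<in> open_segment p q"
    then obtain u where u: "0 < u" "u < 1" and a_c: "a - c = (1 - u) *\<^sub>R p + u *\<^sub>R q"
      by (auto simp: in_segment)
    have "(1 - u) * (qf Q (p + c) - qf Q p) + u * (qf Q (q + c) - qf Q q) = qf Q a - qf Q (a - c)"
      using qf_add_diff_convex_combination[of Q u p q c] unfolding a_c[symmetric] by simp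
    then have comb: "(1 - u) * (qf Q (p + c) - qf Q p) + u * (qf Q (q + c) - qf Q q) = 0"
      using qf_eq by simp
    have "0 \<le> qf Q (p + c) - qf Q p" "0 \<le> qf Q (q + c) - qf Q q"
      using qf_add_ge_voronoi[OF pV c] qf_add_ge_voronoi[OF qV c] by simp_all
    from convex_combination_nonneg_eq_0[OF this u comb]
    have "qf Q (p + c) = qf Q p" "qf Q (q + c) = qf Q q"
      by simp_all
    then have "p + c \<in> voronoi Q" "q + c \<in> voronoi Q"
      using voronoi_add_int_point[OF pV c] voronoi_add_int_point[OF qV c] by auto
    moreover have "a \<in> open_segment (c + p) (c + q)"
      unfolding open_segment_translation using seg by (metis add.commute diff_add_cancel image_eqI)
    ultimately show False
      using extreme by (simp add: add.commute)
  qed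
  ultimately show ?thesis
    by (auto simp: voronoi_vertex_def extreme_point_of_def)
qed

lemma vertex_class_eq:
  assumes "voronoi_vertex Q a"
  shows "vertex_class Q a = (\<lambda>x. a - x) ` Dset Q a"
  using voronoi_vertex_diff_Dset[OF assms] by (auto simp: vertex_class_def)

theorem corollary2p5:
  fixes src tgt :: "'m::finite \<Rightarrow> 'v::finite"
    and B :: "int ^ 'm ^ 'g::finite"
    and Q :: "real ^ 'g ^ 'g"
    and a :: "real ^ 'g"
  assumes "graph_connected src tgt"
    and "CARD('g) = CARD('m) + 1 - CARD('v)"
    and "CARD('g) \<ge> 1"
    and "rows_Z_basis B (H1 src tgt)"
    and "Q = (\<chi> i j. real_of_int ((B ** transpose B) $ i $ j))"
    and "voronoi_vertex Q a"
  shows "convex hull (vertex_class Q a) = (\<lambda>x. a - x) ` (convex hull (Dset Q a))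
         \<and> card (vertex_class Q a) = card (Dset Q a)"
proof
  have reflect: "(\<lambda>x. a - x) = (\<lambda>x. a + (-1) *\<^sub>R x)"
    by auto
  show "convex hull (vertex_class Q a) = (\<lambda>x. a - x) ` (convex hull (Dset Q a))"
    unfolding vertex_class_eq[OF assms(6)] reflect by (rule convex_hull_affinity)
  show "card (vertex_class Q a) = card (Dset Q a)"
    unfolding vertex_class_eq[OF assms(6)] by (rule card_image) (auto simp: inj_on_def)
qed

end
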